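(* Let $M$ be a finite set of primes and let $f,g$ be real functions on the primes such that (i) $p>f(p)\geq g(p)\geq 0$ for all $p\in M$, and (ii) $p>g(p)\geq f(p)\geq 0$ for all primes $p\notin M$. Then for all $z>0$, \[L(z,g)\geq \prod_{p\in M}\frac{p-f(p)}{p-g(p)}\,L(z,f).\]
   Context: For a function $h$ on the primes with $0\le h(p)<p$ for all $p$, and $z>0$, define $L(z,h)=\sum_{q\leq z}\mu^2(q)\prod_{p\mid q}\frac{h(p)}{p-h(p)}$, where $q$ runs over positive integers and $\mu$ is the Möbius function. *)

theory Defs
  imports "HOL-Analysis.Analysis" "HOL-Computational_Algebra.Squarefree"
begin

definition mu_sq :: "nat \<Rightarrow> real" where
  "mu_sq q = (if squarefree q then 1 else 0)"

definition L :: "real \<Rightarrow> (nat \<Rightarrow> real) \<Rightarrow> real" where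
  "L z h = (\<Sum>q\<in>{q::nat. 1 \<le> q \<and> real q \<le> z}.
              mu_sq q * (\<Prod>p\<in>prime_factors q. h p / (real p - h p)))"

end

theory Submission
  imports Defs
begin

text \<open>Change the weight from \<open>g\<close> to \<open>f\<close> one prime \<open>a \<in> M\<close> at a time. Splitting the squarefree
  \<open>q \<le> z\<close> according to whether \<open>a\<close> divides them gives \<open>L z h = A + w\<^sub>h(a) B\<close> with
  \<open>w\<^sub>h(a) = h(a)/(a - h(a))\<close>, where \<open>A\<close> and \<open>B\<close> sum over the integers up to \<open>z\<close> resp. \<open>z/a\<close>
  coprime to \<open>a\<close> and do not depend on \<open>h(a)\<close>. Since \<open>0 \<le> B \<le> A\<close>, lowering \<open>h(a)\<close> from \<open>f(a)\<close> to
  \<open>g(a)\<close> decreases \<open>L\<close> by at most the factor \<open>(a - f(a))/(a - g(a))\<close>. Off \<open>M\<close> we have \<open>f \<le> g\<close>,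
  and \<open>L\<close> is monotone in the weight.\<close>

definition admissible :: "(nat \<Rightarrow> real) \<Rightarrow> bool" where
  "admissible h \<longleftrightarrow> (\<forall>p. prime p \<longrightarrow> 0 \<le> h p \<and> h p < real p)"

definition L_summand :: "(nat \<Rightarrow> real) \<Rightarrow> nat \<Rightarrow> real" where
  "L_summand h q = mu_sq q * (\<Prod>p\<in>prime_factors q. h p / (real p - h p))"

definition L_avoiding :: "nat \<Rightarrow> real \<Rightarrow> (nat \<Rightarrow> real) \<Rightarrow> real" where
  "L_avoiding a z h = (\<Sum>q | 1 \<le> q \<and> real q \<le> z \<and> \<not> a dvd q. L_summand h q)"

lemma L_eq_sum_L_summand: "L z h = (\<Sum>q | 1 \<le> q \<and> real q \<le> z. L_summand h q)"
  unfolding L_def L_summand_def ..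

lemma finite_nat_le_real: "finite {q::nat. real q \<le> z}"
  by (rule finite_subset[of _ "{..nat \<lceil>z\<rceil>}"]) (auto, linarith)

lemma finite_nat_le_real_subset: "finite {q::nat. P q \<and> real q \<le> z \<and> Q q}"
  by (rule finite_subset[OF _ finite_nat_le_real]) auto

lemma L_summand_nonneg:
  assumes "admissible h"
  shows "0 \<le> L_summand h q"
  using assms unfolding L_summand_def mu_sq_def admissible_def
  by (auto intro!: prod_nonneg divide_nonneg_nonneg simp: less_imp_le)

lemma L_summand_mono:
  assumes "admissible h1" "admissible h2" "\<forall>p. prime p \<longrightarrow> h1 p \<le> h2 p"
  shows "L_summand h1 q \<le> L_summand h2 q"
proof -
  have "(\<Prod>p\<in>prime_factors q. h1 p / (real p - h1 p))
      \<le> (\<Prod>p\<in>prime_factors q. h2 p / (real p - h2 p))"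
  proof (rule prod_mono)
    fix p assume "p \<in> prime_factors q"
    then have "0 \<le> h1 p" "h1 p \<le> h2 p" "h2 p < real p"
      using assms unfolding admissible_def by auto
    then show "0 \<le> h1 p / (real p - h1 p) \<and> h1 p / (real p - h1 p) \<le> h2 p / (real p - h2 p)"
      by (auto simp: divide_simps) (smt (verit) mult_mono)
  qed
  then show ?thesis unfolding L_summand_def mu_sq_def by auto
qed

lemma L_summand_cong:
  assumes "\<forall>p\<in>prime_factors q. h1 p = h2 p"
  shows "L_summand h1 q = L_summand h2 q"
  unfolding L_summand_def using assms by (metis (no_types, lifting) prod.cong)

lemma L_summand_prime_mult:
  assumes "prime a"
  shows "L_summand h (a * m) = (if a dvd m then 0 else h a / (real a - h a) * L_summand h m)"
proof (cases "a dvd m")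
  case True
  then have "a * a dvd a * m" by simp
  then have "\<not> squarefree (a * m)"
    using assms unfolding squarefree_def power2_eq_square by (metis not_prime_unit)
  then show ?thesis using True by (simp add: L_summand_def mu_sq_def)
next
  case False
  then have "m \<noteq> 0" by (metis dvd_0_right)
  have "coprime a m" using False assms by (simp add: prime_imp_coprime)
  then have "squarefree (a * m) \<longleftrightarrow> squarefree m"
    using assms squarefree_multD squarefree_mult_coprime squarefree_prime by metis
  moreover have "prime_factors (a * m) = insert a (prime_factors m)"
    using prime_factors_product[of a m] \<open>m \<noteq> 0\<close> assms prime_prime_factors[OF assms] by auto
  moreover have "a \<notin> prime_factors m" using False by auto
  ultimately show ?thesis using False by (simp add: L_summand_def mu_sq_def)
qed

lemma L_avoiding_nonneg: "admissible h \<Longrightarrow> 0 \<le> L_avoiding a z h"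
  unfolding L_avoiding_def by (intro sum_nonneg L_summand_nonneg)

lemma L_avoiding_eq_0: "z < 1 \<Longrightarrow> L_avoiding a z h = 0"
  unfolding L_avoiding_def by (rule sum.neutral) auto

lemma L_avoiding_mono_bound:
  assumes "admissible h" "z' \<le> z"
  shows "L_avoiding a z' h \<le> L_avoiding a z h"
  unfolding L_avoiding_def using assms
  by (intro sum_mono2 finite_nat_le_real_subset L_summand_nonneg) auto

lemma L_avoiding_cong:
  assumes "\<forall>p. p \<noteq> a \<longrightarrow> h1 p = h2 p"
  shows "L_avoiding a z h1 = L_avoiding a z h2"
  unfolding L_avoiding_def using assms by (intro sum.cong L_summand_cong) auto

lemma L_split_prime:
  assumes "prime a"
  shows "L z h = L_avoiding a z h + h a / (real a - h a) * L_avoiding a (z / real a) h"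
proof -
  have "0 < a" using assms prime_gt_0_nat by simp
  then have a_pos: "real a > 0" by simp
  let ?S = "{q::nat. 1 \<le> q \<and> real q \<le> z}"
  let ?T = "{m::nat. 1 \<le> m \<and> real (a * m) \<le> z}"
  have fin_S: "finite ?S" by (rule finite_subset[OF _ finite_nat_le_real]) auto
  have fin_T: "finite ?T"
    using a_pos by (intro finite_subset[OF _ finite_nat_le_real[of "z / real a"]])
      (auto simp: pos_le_divide_eq mult.commute)
  have "L z h = (\<Sum>q\<in>{q\<in>?S. \<not> a dvd q} \<union> {q\<in>?S. a dvd q}. L_summand h q)"
    unfolding L_eq_sum_L_summand by (rule sum.cong) auto
  also have "\<dots> = L_avoiding a z h + (\<Sum>q\<in>{q\<in>?S. a dvd q}. L_summand h q)"
    unfolding L_avoiding_def using fin_S by (subst sum.union_disjoint) (auto intro: finite_nat_le_real_subset)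
  also have "{q\<in>?S. a dvd q} = (*) a ` ?T"
    using \<open>0 < a\<close> by (auto simp: dvd_def Suc_le_eq)
  also have "(\<Sum>q\<in>(*) a ` ?T. L_summand h q) = (\<Sum>m\<in>?T. L_summand h (a * m))"
    using a_pos by (intro sum.reindex[unfolded comp_def]) (auto simp: inj_on_def)
  also have "\<dots> = (\<Sum>m\<in>{m\<in>?T. \<not> a dvd m}. h a / (real a - h a) * L_summand h m)"
    unfolding L_summand_prime_mult[OF assms] sum.inter_filter[OF fin_T] by (rule sum.cong) auto
  also have "{m\<in>?T. \<not> a dvd m} = {m. 1 \<le> m \<and> real m \<le> z / real a \<and> \<not> a dvd m}"
    using a_pos by (auto simp: pos_le_divide_eq mult.commute)
  finally show ?thesis by (simp add: L_avoiding_def sum_distrib_left)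
qed

lemma ratio_mult_weighted_sum_le:
  fixes a x y A B :: real
  assumes "0 \<le> y" "y \<le> x" "x < a" "0 \<le> B" "B \<le> A"
  shows "(a - x) / (a - y) * (A + x / (a - x) * B) \<le> A + y / (a - y) * B"
proof -
  have "(x - y) * B \<le> (x - y) * A" using assms by (intro mult_left_mono) auto
  then have "A * (a - x) + x * B \<le> A * (a - y) + y * B" by (simp add: algebra_simps)
  with assms show ?thesis by (simp add: divide_simps)
qed

lemma L_change_at_prime:
  assumes "prime a" "admissible h1" "admissible h2" "h2 a \<le> h1 a"
    and "\<forall>p. p \<noteq> a \<longrightarrow> h1 p = h2 p"
  shows "(real a - h1 a) / (real a - h2 a) * L z h1 \<le> L z h2"
proof -
  have "L_avoiding a (z / real a) h1 \<le> L_avoiding a z h1"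
  proof (cases "z / real a < 1")
    case True
    then show ?thesis using L_avoiding_eq_0 L_avoiding_nonneg[OF assms(2)] by simp
  next
    case False
    have "1 \<le> real a" using assms(1) prime_ge_1_nat by simp
    with False have "z / real a \<le> z"
      by (simp add: divide_le_eq le_divide_eq mult_le_cancel_left1)
    with assms(2) show ?thesis by (rule L_avoiding_mono_bound)
  qed
  moreover have "0 \<le> L_avoiding a (z / real a) h1" using assms(2) by (rule L_avoiding_nonneg)
  moreover have "0 \<le> h2 a" "h1 a < real a" using assms(1-3) unfolding admissible_def by auto
  ultimately show ?thesis
    using ratio_mult_weighted_sum_le[OF _ assms(4)] assms(1)
    unfolding L_split_prime[OF assms(1), of z] L_avoiding_cong[OF assms(5)] by blast
qed

lemma L_mono:
  assumes "admissible h1" "admissible h2" "\<forall>p. prime p \<longrightarrow> h1 p \<le> h2 p"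
  shows "L z h1 \<le> L z h2"
  unfolding L_eq_sum_L_summand using L_summand_mono[OF assms] by (intro sum_mono)

lemma L_change_on_finite_set:
  assumes "finite M" "\<forall>p\<in>M. prime p" "admissible g" "admissible h"
    and "\<forall>p\<in>M. g p \<le> h p" "\<forall>p. p \<notin> M \<longrightarrow> g p = h p"
  shows "(\<Prod>p\<in>M. (real p - h p) / (real p - g p)) * L z h \<le> L z g"
  using assms
proof (induction M arbitrary: g rule: finite_induct)
  case empty
  then show ?case by (simp add: fun_eq_iff)
next
  case (insert a M)
  define g' where "g' = g(a := h a)"
  have "prime a" "admissible g'"
    using insert.prems unfolding admissible_def g'_def by auto
  have "(\<Prod>p\<in>M. (real p - h p) / (real p - g p)) = (\<Prod>p\<in>M. (real p - h p) / (real p - g' p))"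
    using \<open>a \<notin> M\<close> by (intro prod.cong) (auto simp: g'_def)
  also have "\<dots> * L z h \<le> L z g'"
    using insert.prems by (intro insert.IH \<open>admissible g'\<close>) (auto simp: g'_def)
  finally have IH: "(\<Prod>p\<in>M. (real p - h p) / (real p - g p)) * L z h \<le> L z g'" .
  have "g' a = h a" by (simp add: g'_def)
  have ratio_nonneg: "0 \<le> (real a - h a) / (real a - g a)"
    using insert.prems \<open>prime a\<close> unfolding admissible_def by (auto intro: less_imp_le)
  have "(\<Prod>p\<in>insert a M. (real p - h p) / (real p - g p)) * L z h
      = (real a - h a) / (real a - g a) * ((\<Prod>p\<in>M. (real p - h p) / (real p - g p)) * L z h)"
    using insert.hyps by simp
  also have "\<dots> \<le> (real a - g' a) / (real a - g a) * L z g'"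
    unfolding \<open>g' a = h a\<close> using IH ratio_nonneg by (rule mult_left_mono)
  also have "\<dots> \<le> L z g"
    using insert.prems \<open>prime a\<close> by (intro L_change_at_prime \<open>admissible g'\<close>) (auto simp: g'_def)
  finally show ?case .
qed

theorem lemma2:
  fixes M :: "nat set" and f g :: "nat \<Rightarrow> real" and z :: real
  assumes "finite M" and "\<forall>p\<in>M. prime p"
    and "\<forall>p\<in>M. real p > f p \<and> f p \<ge> g p \<and> g p \<ge> 0"
    and "\<forall>p. prime p \<and> p \<notin> M \<longrightarrow> real p > g p \<and> g p \<ge> f p \<and> f p \<ge> 0"
    and "z > 0"
  shows "L z g \<ge> (\<Prod>p\<in>M. (real p - f p) / (real p - g p)) * L z f"
proof -
  define h where "h p = (if p \<in> M then f p else g p)" for p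
  have admissible: "admissible f" "admissible g" "admissible h"
    using assms(3,4) unfolding admissible_def h_def by (smt (verit))+
  have "0 \<le> (\<Prod>p\<in>M. (real p - f p) / (real p - g p))"
    using assms(3) by (intro prod_nonneg) auto
  moreover have "L z f \<le> L z h"
    using assms(4) by (intro L_mono admissible) (auto simp: h_def)
  ultimately have "(\<Prod>p\<in>M. (real p - f p) / (real p - g p)) * L z f
      \<le> (\<Prod>p\<in>M. (real p - h p) / (real p - g p)) * L z h"
    by (simp add: h_def mult_left_mono)
  also have "\<dots> \<le> L z g"
    using assms(1-3) by (intro L_change_on_finite_set admissible) (auto simp: h_def)
  finally show ?thesis .
qed

end
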